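(* Index $\mathbb{R}^{2^L}$ by leaves $j \in \{0,\dots,2^L-1\}$ of a complete binary tree of depth $L$ in which each node at depth $k$ corresponds to a dyadic block $\{a,\dots,a+2^{L-k}-1\}$ of consecutive indices whose two children are its two halves, and let $W_L$ act by the induced permutation representation. The matched unitary of this representation is the Haar wavelet basis matrix, with columns ordered by scale: the scaling function $\phi(j) = 2^{-L/2}$, then for $s = 1,\dots,L$ the mother wavelets $\psi_{s,0},\dots,\psi_{s,2^{s-1}-1}$, where for $p \in \{0,\dots,2^{s-1}-1\}$, $a = p\,2^{L-s+1}$, $h = 2^{L-s}$, $\psi_{s,p}(j) = 2^{(s-L-1)/2}$ if $a \le j < a+h$, $-2^{(s-L-1)/2}$ if $a+h \le j < a+2h$, and $0$ otherwise. For every $W_L$-invariant covariance $\mathbf{R}$ on $\mathbb{R}^{2^L}$ the Haar wavelet transform diagonalizes $\mathbf{R}$, and the eigenvalue on the scale-$s$ subspace $\mathrm{span}\{\psi_{s,p}\}_p$ is $2^{s-1}$-fold degenerate.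
   Context: $W_L = \mathbb{Z}_2 \wr \cdots \wr \mathbb{Z}_2$ ($L$ levels), defined by $W_1 = \mathbb{Z}_2$, $W_d = W_{d-1}^2 \rtimes \mathbb{Z}_2$, acts on the leaves by tree-automorphisms: at each internal node a $\mathbb{Z}_2$ factor swaps the two child subtrees, independently across non-overlapping subtrees. A covariance (real symmetric positive semidefinite matrix) $\mathbf{R}$ is $W_L$-invariant if $\mathbf{P}_g \mathbf{R} \mathbf{P}_g^{-1} = \mathbf{R}$ for every permutation matrix $\mathbf{P}_g$, $g \in W_L$. The matched unitary is an orthogonal basis diagonalizing every such invariant covariance. *)

theory Defs
  imports "HOL-Analysis.Analysis" "HOL-Library.Log_Nat"
begin

text \<open>A node at depth k < L with block index b is the dyadic block
  {b*2^(L-k) ..< (b+1)*2^(L-k)}; its two children are the two halves.\<close>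

definition node_swap :: "nat \<Rightarrow> nat \<Rightarrow> nat \<Rightarrow> nat \<Rightarrow> nat" where
  "node_swap L k b j =
     (let a = b * 2^(L-k); h = 2^(L-k-1) in
      if a \<le> j \<and> j < a + h then j + h
      else if a + h \<le> j \<and> j < a + 2*h then j - h
      else j)"

text \<open>The iterated wreath product W_L as the permutation group of the leaves
  generated by all node swaps (internal nodes: depth k < L, block b < 2^k).\<close>

inductive_set wreath_group :: "nat \<Rightarrow> (nat \<Rightarrow> nat) set" for L where
  id: "id \<in> wreath_group L"
| swap: "\<lbrakk>g \<in> wreath_group L; k < L; b < 2^k\<rbrakk> \<Longrightarrow> node_swap L k b \<circ> g \<in> wreath_group L"

definition covariance :: "nat \<Rightarrow> (nat \<Rightarrow> nat \<Rightarrow> real) \<Rightarrow> bool" where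
  "covariance L R \<longleftrightarrow>
     (\<forall>i<2^L. \<forall>j<2^L. R i j = R j i) \<and>
     (\<forall>x :: nat \<Rightarrow> real. (\<Sum>i<2^L. \<Sum>j<2^L. x i * R i j * x j) \<ge> 0)"

text \<open>P_g R P_g^{-1} = R with (P_g)_{ij} = [i = g j] means R (g^{-1} i) (g^{-1} j) = R i j;
  as W_L is a group this is the same as R (g i) (g j) = R i j for all g.\<close>

definition invariant_cov :: "nat \<Rightarrow> (nat \<Rightarrow> nat \<Rightarrow> real) \<Rightarrow> bool" where
  "invariant_cov L R \<longleftrightarrow> covariance L R \<and>
     (\<forall>g \<in> wreath_group L. \<forall>i<2^L. \<forall>j<2^L. R (g i) (g j) = R i j)"

definition haar_phi :: "nat \<Rightarrow> nat \<Rightarrow> real" where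
  "haar_phi L j = 2 powr (- real L / 2)"

definition haar_psi :: "nat \<Rightarrow> nat \<Rightarrow> nat \<Rightarrow> nat \<Rightarrow> real" where
  "haar_psi L s p j =
     (let a = p * 2^(L-s+1); h = 2^(L-s); c = 2 powr ((real s - real L - 1) / 2) in
      if a \<le> j \<and> j < a + h then c
      else if a + h \<le> j \<and> j < a + 2*h then - c
      else 0)"

text \<open>Column c of the Haar matrix (scale ordering): c = 0 is the scaling function;
  c = 2^(s-1) + p with 1 \<le> s \<le> L, p < 2^(s-1) is psi_{s,p}; note floorlog 2 c = s.\<close>

definition haar_col :: "nat \<Rightarrow> nat \<Rightarrow> nat \<Rightarrow> real" where
  "haar_col L c j =
     (if c = 0 then haar_phi L j
      else haar_psi L (floorlog 2 c) (c - 2^(floorlog 2 c - 1)) j)"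

definition haar_scale :: "nat \<Rightarrow> nat" where
  "haar_scale c = (if c = 0 then 0 else floorlog 2 c)"

end

theory Submission
  imports Defs
begin

text \<open>The bit flip j \<mapsto> j XOR 2^m is the product of the swaps at all nodes of depth
  L - 1 - m, so W_L contains every translation j \<mapsto> j XOR t of the leaves, viewed as
  (Z/2)^L, and an invariant R satisfies R (i XOR t) (j XOR t) = R i j.  Up to normalisation
  the wavelet \<psi>_{s,p} is +1 and -1 on the two halves of the depth-(s-1) block B with
  block index p.  For a leaf i in B, translating by i turns row i of R against \<psi>_{s,p} into
  row 0 against \<psi>_{s,0}, which gives an eigenvalue depending on s only; for i outside B,
  the swap at B fixes i and negates \<psi>_{s,p}, so the row sum vanishes.  Orthonormality is a
  direct computation on dyadic blocks.\<close>

unbundle bit_operations_syntax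

lemma nat_div_eq_iff: "0 < (m::nat) \<Longrightarrow> j div m = q \<longleftrightarrow> q * m \<le> j \<and> j < q * m + m"
  by (metis add.commute div_nat_eqI div_times_less_eq_dividend dividend_less_times_div
      mult.commute mult_Suc_right)

lemma xor_less_power_nat: "(x::nat) < 2^n \<Longrightarrow> y < 2^n \<Longrightarrow> x XOR y < 2^n"
  by (metis take_bit_nat_eq_self_iff take_bit_xor)

lemma xor_div_power: "((x::nat) XOR y) div 2^n = x div 2^n XOR y div 2^n"
  by (simp flip: drop_bit_eq_div)

lemma xor_power_div_power: "m < n \<Longrightarrow> ((j::nat) XOR 2^m) div 2^n = j div 2^n"
  by (simp flip: drop_bit_eq_div add: drop_bit_exp_eq)

lemma xor_power_eq_add: "even ((x::nat) div 2^n) \<Longrightarrow> x XOR 2^n = x + 2^n"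
  by (simp add: bit_iff_odd and_exp_eq_0_iff_not_bit disjunctive_add_eq_xor)

lemma xor_power_eq_diff:
  assumes "odd ((x::nat) div 2^n)"
  shows "x XOR 2^n = x - 2^n"
proof -
  have "x \<ge> 2^n" using assms by (cases "x < 2^n") auto
  then have "x div 2^n = (x - 2^n) div 2^n + 1"
    by (metis div_add_self2 le_add_diff_inverse2 power_not_zero zero_neq_numeral)
  then have "(x - 2^n) XOR 2^n = x"
    using assms \<open>x \<ge> 2^n\<close> xor_power_eq_add[of "x - 2^n" n] by simp
  then show ?thesis by (metis xor.assoc xor_self_eq xor.right_neutral)
qed

lemma sum_reindex_involution:
  assumes "\<And>j. j < n \<Longrightarrow> g j < n \<and> g (g j) = j"
  shows "(\<Sum>j<n. f (g j)) = (\<Sum>j<n. f j)"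
  by (rule sum.reindex_bij_witness[of _ g g]) (use assms in auto)

lemma sum_eq_0_if_involution_negates:
  fixes f :: "nat \<Rightarrow> real"
  assumes "\<And>j. j < n \<Longrightarrow> g j < n \<and> g (g j) = j" "\<And>j. j < n \<Longrightarrow> f (g j) = - f j"
  shows "(\<Sum>j<n. f j) = 0"
proof -
  have "(\<Sum>j<n. f j) = (\<Sum>j<n. f (g j))" by (rule sum_reindex_involution[OF assms(1), symmetric])
  also have "\<dots> = - (\<Sum>j<n. f j)" using assms(2) by (simp add: sum_negf)
  finally show ?thesis by simp
qed

lemma sum_div_blocks:
  fixes F :: "nat \<Rightarrow> 'a::comm_semiring_1"
  assumes "0 < h"
  shows "(\<Sum>j<m * h. F (j div h)) = of_nat h * (\<Sum>q<m. F q)"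
proof -
  have "(\<Sum>j<m * h. F (j div h)) = (\<Sum>q<m. \<Sum>j\<in>{q * h..<q * h + h}. F (j div h))"
    by (rule sum.nat_group[symmetric])
  also have "\<dots> = (\<Sum>q<m. \<Sum>j\<in>{q * h..<q * h + h}. F q)"
  proof (intro sum.cong refl)
    fix q j
    assume "j \<in> {q * h..<q * h + h}"
    then have "j div h = q" using nat_div_eq_iff[OF assms] by simp
    then show "F (j div h) = F q" by simp
  qed
  finally show ?thesis by (simp add: sum_distrib_left)
qed

section \<open>Translations in the wreath group\<close>

lemma node_swap_eq_xor:
  assumes "k < L"
  shows "node_swap L k b j = (if j div 2^(L-k) = b then j XOR 2^(L-k-1) else j)"
proof -
  define n where "n = L - k - 1"
  have "L - k = Suc n" using assms n_def by simp
  then have block: "(2::nat)^(L-k) = 2^n * 2" by simp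
  have first_half: "b * (2^n * 2) \<le> j \<and> j < b * (2^n * 2) + 2^n \<longleftrightarrow> j div 2^n = 2 * b"
    using nat_div_eq_iff[of "2^n" j "2 * b"] by (simp add: ac_simps)
  have second_half:
    "b * (2^n * 2) + 2^n \<le> j \<and> j < b * (2^n * 2) + 2 * 2^n \<longleftrightarrow> j div 2^n = 2 * b + 1"
    using nat_div_eq_iff[of "2^n" j "2 * b + 1"] by (simp add: algebra_simps)
  have "j div 2^(L-k) = b \<longleftrightarrow> j div 2^n = 2 * b \<or> j div 2^n = 2 * b + 1"
    using nat_div_eq_iff[of 2 "j div 2^n" b] by (auto simp: block div_mult2_eq)
  then show ?thesis
    unfolding node_swap_def Let_def block n_def[symmetric] first_half second_half
    using xor_power_eq_add[of j n] xor_power_eq_diff[of j n] by auto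
qed

lemma node_swap_involution:
  assumes "k < L" "j < 2^L"
  shows "node_swap L k b j < 2^L" "node_swap L k b (node_swap L k b j) = j"
proof -
  have "(2::nat)^(L-k-1) < 2^L" using assms(1) by simp
  then show "node_swap L k b j < 2^L" "node_swap L k b (node_swap L k b j) = j"
    using assms node_swap_eq_xor[OF assms(1)] xor_power_div_power[of "L-k-1" "L-k" j]
      xor_less_power_nat[OF assms(2)] by (auto simp: xor.assoc)
qed

lemma wreath_group_comp:
  "g \<in> wreath_group L \<Longrightarrow> h \<in> wreath_group L \<Longrightarrow> g \<circ> h \<in> wreath_group L"
proof (induction g rule: wreath_group.induct)
  case id
  then show ?case by simp
next
  case (swap g k b)
  then show ?case by (metis comp_assoc wreath_group.swap)
qed

lemma node_swap_in_wreath_group: "k < L \<Longrightarrow> b < 2^k \<Longrightarrow> node_swap L k b \<in> wreath_group L"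
  using wreath_group.swap[OF wreath_group.id] by simp

lemma wreath_group_level_swaps_upto:
  assumes "k < L" "n \<le> 2^k"
  shows "\<exists>g\<in>wreath_group L. \<forall>j. g j = (if j div 2^(L-k) < n then j XOR 2^(L-k-1) else j)"
  using assms(2)
proof (induction n)
  case 0
  show ?case by (intro bexI[of _ id] wreath_group.id) simp
next
  case (Suc n)
  then obtain g where g: "g \<in> wreath_group L"
    and g_eq: "\<And>j. g j = (if j div 2^(L-k) < n then j XOR 2^(L-k-1) else j)"
    by auto
  have same_block: "(j XOR 2^(L-k-1)) div 2^(L-k) = j div 2^(L-k)" for j :: nat
    using assms(1) by (simp add: xor_power_div_power)
  have "node_swap L k n \<circ> g \<in> wreath_group L"
    using g Suc.prems assms(1) by (intro wreath_group.swap) auto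
  moreover have "(node_swap L k n \<circ> g) j = (if j div 2^(L-k) < Suc n then j XOR 2^(L-k-1) else j)" for j
    using g_eq node_swap_eq_xor[OF assms(1)] same_block by auto
  ultimately show ?case by blast
qed

lemma wreath_group_xor_power:
  assumes "m < L"
  shows "\<exists>g\<in>wreath_group L. \<forall>j<2^L. g j = j XOR 2^m"
proof -
  define k where "k = L - 1 - m"
  have k: "k < L" "L - k - 1 = m" using assms k_def by auto
  then have "(2::nat)^L = 2^k * 2^(L-k)" by (simp flip: power_add)
  obtain g where g: "g \<in> wreath_group L"
    and g_eq: "\<And>j. g j = (if j div 2^(L-k) < 2^k then j XOR 2^(L-k-1) else j)"
    using wreath_group_level_swaps_upto[OF k(1), of "2^k"] by auto
  have "j div 2^(L-k) < 2^k" if "j < 2^L" for j :: nat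
    using that \<open>2^L = 2^k * 2^(L-k)\<close> by (simp add: div_less_iff_less_mult)
  then show ?thesis using g g_eq k(2) by (intro bexI[of _ g]) auto
qed

lemma wreath_group_xor:
  assumes "t < 2^L"
  shows "\<exists>g\<in>wreath_group L. \<forall>j<2^L. g j = j XOR t"
proof -
  have "\<exists>g\<in>wreath_group L. \<forall>j<2^L. g j = j XOR take_bit m t" if "m \<le> L" for m
    using that
  proof (induction m)
    case 0
    show ?case by (intro bexI[of _ id] wreath_group.id) simp
  next
    case (Suc m)
    then obtain g where g: "g \<in> wreath_group L" "\<forall>j<2^L. g j = j XOR take_bit m t"
      by auto
    show ?case
    proof (cases "bit t m")
      case False
      then have "take_bit (Suc m) t = take_bit m t" by (simp add: take_bit_Suc_from_most)
      with g show ?thesis by (intro bexI[of _ g]) simp_all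
    next
      case True
      obtain g' where g': "g' \<in> wreath_group L" "\<forall>j<2^L. g' j = j XOR 2^m"
        using wreath_group_xor_power[of m L] Suc.prems by auto
      have "take_bit m t AND 2^m = 0"
        by (simp add: and_exp_eq_0_iff_not_bit bit_take_bit_iff)
      then have top_bit: "take_bit (Suc m) t = take_bit m t XOR 2^m"
        using True take_bit_Suc_from_most[of m t] disjunctive_add_eq_xor[of "take_bit m t" "2^m"]
        by simp
      have "(2::nat)^m \<le> 2^L" using Suc.prems by simp
      then have low: "take_bit m t < 2^L" by (meson order_less_le_trans take_bit_nat_less_exp)
      have "\<forall>j<2^L. (g' \<circ> g) j = j XOR take_bit (Suc m) t"
        using g g' low top_bit xor_less_power_nat by (simp add: xor.assoc)
      then show ?thesis using wreath_group_comp[OF g'(1) g(1)] by blast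
    qed
  qed
  from this[of L] show ?thesis using assms by (simp add: take_bit_nat_eq_self)
qed

lemma invariant_cov_xor:
  assumes "invariant_cov L R" "t < 2^L" "i < 2^L" "j < 2^L"
  shows "R (i XOR t) (j XOR t) = R i j"
  using wreath_group_xor[OF assms(2)] assms unfolding invariant_cov_def by metis

lemma invariant_cov_node_swap:
  assumes "invariant_cov L R" "k < L" "b < 2^k" "i < 2^L" "j < 2^L"
  shows "R (node_swap L k b i) (node_swap L k b j) = R i j"
  using node_swap_in_wreath_group[OF assms(2,3)] assms unfolding invariant_cov_def by blast

section \<open>Orthonormality of the Haar basis\<close>

definition haar_sign :: "nat \<Rightarrow> nat \<Rightarrow> real" where
  "haar_sign q p = (if q = 2 * p then 1 else if q = 2 * p + 1 then -1 else 0)"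

lemma haar_sign_eq: "haar_sign q p = (if q div 2 = p then if even q then 1 else -1 else 0)"
  unfolding haar_sign_def by (auto; presburger)

lemma haar_sign_xor:
  assumes "q div 2 = p"
  shows "haar_sign (x XOR q) p = haar_sign x 0 * haar_sign q p"
proof -
  have "(x XOR q) div 2 = (x div 2) XOR p"
    using assms xor_div_power[of x q 1] by simp
  moreover have "(x div 2) XOR p = p \<longleftrightarrow> x div 2 = 0"
    by (metis xor.assoc xor.left_neutral xor_self_eq)
  ultimately show ?thesis using assms by (auto simp: haar_sign_eq even_xor_iff)
qed

lemma sum_haar_sign:
  assumes "2 * p + 1 < N"
  shows "(\<Sum>q<N. G q * haar_sign q p) = G (2 * p) - G (2 * p + 1)"
proof -
  have "(\<Sum>q<N. G q * haar_sign q p)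
      = (\<Sum>q<N. (if q = 2 * p then G q else 0) - (if q = 2 * p + 1 then G q else 0))"
    by (rule sum.cong) (auto simp: haar_sign_def)
  also have "\<dots> = G (2 * p) - G (2 * p + 1)" using assms by (simp add: sum_subtractf)
  finally show ?thesis .
qed

lemma haar_psi_eq_sign:
  "haar_psi L s p j = 2 powr ((real s - real L - 1) / 2) * haar_sign (j div 2^(L-s)) p"
proof -
  have double: "(2::nat)^(L-s+1) = 2^(L-s) * 2" by simp
  have first_half:
    "p * (2^(L-s) * 2) \<le> j \<and> j < p * (2^(L-s) * 2) + 2^(L-s) \<longleftrightarrow> j div 2^(L-s) = 2 * p"
    using nat_div_eq_iff[of "2^(L-s)" j "2 * p"] by (simp add: ac_simps)
  have second_half: "p * (2^(L-s) * 2) + 2^(L-s) \<le> j \<and> j < p * (2^(L-s) * 2) + 2 * 2^(L-s)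
      \<longleftrightarrow> j div 2^(L-s) = 2 * p + 1"
    using nat_div_eq_iff[of "2^(L-s)" j "2 * p + 1"] by (simp add: algebra_simps)
  show ?thesis
    unfolding haar_psi_def Let_def double first_half second_half haar_sign_def by simp
qed

lemma haar_psi_inner_le:
  assumes "1 \<le> s" "s \<le> s'" "s' \<le> L" "p < 2^(s-1)" "p' < 2^(s'-1)"
  shows "(\<Sum>j<2^L. haar_psi L s p j * haar_psi L s' p' j) = (if s = s' \<and> p = p' then 1 else 0)"
proof -
  define h :: nat where "h = 2^(L-s')"
  define d where "d = s' - s"
  define C where "C = 2 powr ((real s - real L - 1) / 2) * 2 powr ((real s' - real L - 1) / 2)"
  have coarse: "(2::nat)^(L-s) = h * 2^d" and total: "(2::nat)^L = 2^s' * h"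
    unfolding h_def d_def using assms by (simp_all flip: power_add)
  have "(\<Sum>j<2^L. haar_psi L s p j * haar_psi L s' p' j)
      = (\<Sum>j<2^s' * h. C * haar_sign (j div h div 2^d) p * haar_sign (j div h) p')"
    unfolding total
    by (intro sum.cong refl) (simp add: haar_psi_eq_sign coarse C_def div_mult2_eq flip: h_def)
  also have "\<dots> = real h * (\<Sum>q<2^s'. C * haar_sign (q div 2^d) p * haar_sign q p')"
    by (rule sum_div_blocks[of h "\<lambda>q. C * haar_sign (q div 2^d) p * haar_sign q p'"])
      (simp add: h_def)
  also have "(\<Sum>q<2^s'. C * haar_sign (q div 2^d) p * haar_sign q p')
      = C * haar_sign (2 * p' div 2^d) p - C * haar_sign ((2 * p' + 1) div 2^d) p"
    using assms by (intro sum_haar_sign) (cases s', auto)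
  finally have inner: "(\<Sum>j<2^L. haar_psi L s p j * haar_psi L s' p' j)
      = real h * (C * haar_sign (2 * p' div 2^d) p - C * haar_sign ((2 * p' + 1) div 2^d) p)" .
  show ?thesis
  proof (cases "d = 0")
    case False
    then have "(2::nat)^d = 2 * 2^(d-1)" by (cases d) auto
    then have "(2 * p' + 1) div 2^d = 2 * p' div 2^d" by (simp add: div_mult2_eq)
    then show ?thesis using inner False d_def by auto
  next
    case True
    then have "s = s'" using assms d_def by simp
    have "real h * C * 2 = 1"
    proof -
      have "real h = 2 powr (real L - real s)"
        unfolding h_def using assms \<open>s = s'\<close> by (simp add: powr_realpow[symmetric] of_nat_diff)
      then have "real h * C * 2 = 2 powr ((real L - real s) + (real s - real L - 1) + 1)"
        unfolding C_def \<open>s = s'\<close> by (simp add: powr_add[symmetric])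
      then show ?thesis by simp
    qed
    moreover have "haar_sign (2 * p') p = (if p = p' then 1 else 0)"
      "haar_sign (2 * p' + 1) p = (if p = p' then -1 else 0)"
      by (auto simp: haar_sign_def)
    ultimately show ?thesis using inner True \<open>s = s'\<close>
      by (cases "p = p'") (simp_all add: algebra_simps)
  qed
qed

lemma haar_psi_inner:
  assumes "1 \<le> s" "s \<le> L" "p < 2^(s-1)" "1 \<le> s'" "s' \<le> L" "p' < 2^(s'-1)"
  shows "(\<Sum>j<2^L. haar_psi L s p j * haar_psi L s' p' j) = (if s = s' \<and> p = p' then 1 else 0)"
  using haar_psi_inner_le[of s s' L p p'] haar_psi_inner_le[of s' s L p' p] assms
  by (cases "s \<le> s'") (auto simp: mult.commute)

lemma haar_psi_sum:
  assumes "1 \<le> s" "s \<le> L" "p < 2^(s-1)"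
  shows "(\<Sum>j<2^L. haar_psi L s p j) = 0"
proof -
  define h :: nat where "h = 2^(L-s)"
  define C where "C = 2 powr ((real s - real L - 1) / 2)"
  have total: "(2::nat)^L = 2^s * h" unfolding h_def using assms by (simp flip: power_add)
  have "(\<Sum>j<2^L. haar_psi L s p j) = (\<Sum>j<2^s * h. C * haar_sign (j div h) p)"
    unfolding total haar_psi_eq_sign h_def C_def ..
  also have "\<dots> = real h * (\<Sum>q<2^s. C * haar_sign q p)"
    by (rule sum_div_blocks) (simp add: h_def)
  also have "(\<Sum>q<2^s. C * haar_sign q p) = 0"
    using sum_haar_sign[of p "2^s" "\<lambda>_. C"] assms by (cases s) auto
  finally show ?thesis by simp
qed

lemma haar_phi_inner: "(\<Sum>j<2^L. haar_phi L j * haar_phi L j) = 1"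
proof -
  have "(\<Sum>j<2^L. haar_phi L j * haar_phi L j) = 2 powr real L * 2 powr (- real L)"
    by (simp add: haar_phi_def powr_add[symmetric] powr_realpow)
  then show ?thesis by (simp add: powr_add[symmetric])
qed

lemma haar_col_psi_index:
  assumes "0 < c" "c < 2^L"
  obtains s p where "1 \<le> s" "s \<le> L" "p < 2^(s-1)" "c = 2^(s-1) + p"
    "haar_scale c = s" "haar_col L c = haar_psi L s p"
proof -
  define s where "s = floorlog 2 c"
  have bounds: "2^(s-1) \<le> c" "c < 2^s" using floorlog_bounds[of c 2] assms s_def by auto
  then have "1 \<le> s" using assms by (cases s) auto
  have "(2::nat)^(s-1) < 2^L" using bounds assms by linarith
  then have "s \<le> L" by (simp add: power_strict_increasing_iff)
  have "c - 2^(s-1) < 2^(s-1)" using bounds \<open>1 \<le> s\<close> by (cases s) auto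
  then show thesis
    using that[of s "c - 2^(s-1)"] bounds \<open>1 \<le> s\<close> \<open>s \<le> L\<close> assms
    by (simp add: haar_scale_def haar_col_def s_def fun_eq_iff)
qed

lemma haar_col_orthonormal:
  assumes "c < 2^L" "c' < 2^L"
  shows "(\<Sum>j<2^L. haar_col L c j * haar_col L c' j) = (if c = c' then 1 else 0)"
proof -
  have phi_psi: "(\<Sum>j<2^L. haar_phi L j * haar_col L d j) = 0" if d: "0 < d" "d < 2^L" for d
  proof -
    obtain s p where "1 \<le> s" "s \<le> L" "p < 2^(s-1)" "haar_col L d = haar_psi L s p"
      using haar_col_psi_index[OF d] by metis
    then show ?thesis using haar_psi_sum by (simp add: haar_phi_def flip: sum_distrib_left)
  qed
  consider "c = 0" "c' = 0" | "c = 0" "0 < c'" | "0 < c" "c' = 0" | "0 < c" "0 < c'" by blast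
  then show ?thesis
  proof cases
    case 1
    then show ?thesis using haar_phi_inner by (simp add: haar_col_def)
  next
    case 2
    then show ?thesis using phi_psi assms by (simp add: haar_col_def)
  next
    case 3
    then show ?thesis using phi_psi assms by (simp add: haar_col_def mult.commute)
  next
    case 4
    obtain s p where sp: "1 \<le> s" "s \<le> L" "p < 2^(s-1)" "c = 2^(s-1) + p"
      "haar_scale c = s" "haar_col L c = haar_psi L s p"
      using haar_col_psi_index[OF 4(1) assms(1)] .
    obtain s' p' where sp': "1 \<le> s'" "s' \<le> L" "p' < 2^(s'-1)" "c' = 2^(s'-1) + p'"
      "haar_scale c' = s'" "haar_col L c' = haar_psi L s' p'"
      using haar_col_psi_index[OF 4(2) assms(2)] .
    have "c = c' \<longleftrightarrow> s = s' \<and> p = p'" using sp sp' by auto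
    then show ?thesis using haar_psi_inner[OF sp(1-3) sp'(1-3)] sp(6) sp'(6) by simp
  qed
qed

section \<open>Haar wavelets as eigenvectors\<close>

lemma invariant_cov_row_translate:
  assumes "invariant_cov L R" "i < 2^L"
  shows "(\<Sum>j<2^L. R i j * f j) = (\<Sum>j<2^L. R 0 j * f (j XOR i))"
proof -
  have "(\<Sum>j<2^L. R i j * f j) = (\<Sum>j<2^L. R i (j XOR i) * f (j XOR i))"
    by (rule sum_reindex_involution[symmetric])
      (simp add: xor_less_power_nat assms(2) xor.assoc)
  also have "\<dots> = (\<Sum>j<2^L. R 0 j * f (j XOR i))"
    using invariant_cov_xor[OF assms, of 0] assms(2) by simp
  finally show ?thesis .
qed

lemma haar_sign_row_sum_in_block:
  assumes "invariant_cov L R" "i < 2^L" "i div 2^(L-s) div 2 = p"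
  shows "(\<Sum>j<2^L. R i j * haar_sign (j div 2^(L-s)) p)
       = (\<Sum>j<2^L. R 0 j * haar_sign (j div 2^(L-s)) 0) * haar_sign (i div 2^(L-s)) p"
proof -
  have "(\<Sum>j<2^L. R i j * haar_sign (j div 2^(L-s)) p)
      = (\<Sum>j<2^L. R 0 j * haar_sign ((j XOR i) div 2^(L-s)) p)"
    by (rule invariant_cov_row_translate[OF assms(1,2)])
  also have "\<dots> = (\<Sum>j<2^L. R 0 j * (haar_sign (j div 2^(L-s)) 0 * haar_sign (i div 2^(L-s)) p))"
    using haar_sign_xor[OF assms(3)] by (simp add: xor_div_power)
  finally show ?thesis by (simp add: sum_distrib_right mult.assoc)
qed

lemma haar_sign_row_sum_off_block:
  assumes "invariant_cov L R" "1 \<le> s" "s \<le> L" "p < 2^(s-1)" "i < 2^L"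
    and off: "i div 2^(L-s) div 2 \<noteq> p"
  shows "(\<Sum>j<2^L. R i j * haar_sign (j div 2^(L-s)) p) = 0"
proof (rule sum_eq_0_if_involution_negates[where g = "node_swap L (s-1) p"])
  define h :: nat where "h = 2^(L-s)"
  have level: "s - 1 < L" "L - (s-1) - 1 = L - s" "L - (s-1) = Suc (L - s)"
    using assms by auto
  have block: "(2::nat)^(L-(s-1)) = h * 2" unfolding level(3) h_def by simp
  have swap: "node_swap L (s-1) p j = (if j div h div 2 = p then j XOR h else j)" for j
    unfolding node_swap_eq_xor[OF level(1)] level(2) block by (simp add: h_def div_mult2_eq)
  show "node_swap L (s-1) p j < 2^L \<and> node_swap L (s-1) p (node_swap L (s-1) p j) = j"
    if "j < 2^L" for j
    using node_swap_involution[OF level(1) that] by simp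
  have sign_flip: "haar_sign (node_swap L (s-1) p j div h) p = - haar_sign (j div h) p" for j
  proof (cases "j div h div 2 = p")
    case True
    have "(j XOR h) div h = 1 XOR j div h"
      by (simp add: h_def xor_div_power xor.commute)
    then show ?thesis using True haar_sign_xor[OF True, of 1] swap by (simp add: haar_sign_def)
  next
    case False
    then show ?thesis using swap by (simp add: haar_sign_eq)
  qed
  show "R i (node_swap L (s-1) p j) * haar_sign (node_swap L (s-1) p j div 2^(L-s)) p
      = - (R i j * haar_sign (j div 2^(L-s)) p)" if "j < 2^L" for j
  proof -
    have "node_swap L (s-1) p i = i" using swap off by (simp add: h_def)
    then have "R i (node_swap L (s-1) p j) = R i j"
      using invariant_cov_node_swap[OF assms(1) level(1) assms(4,5) that] by simp
    then show ?thesis using sign_flip[of j] by (simp add: h_def)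
  qed
qed

lemma haar_sign_row_sum:
  assumes "invariant_cov L R" "1 \<le> s" "s \<le> L" "p < 2^(s-1)" "i < 2^L"
  shows "(\<Sum>j<2^L. R i j * haar_sign (j div 2^(L-s)) p)
       = (\<Sum>j<2^L. R 0 j * haar_sign (j div 2^(L-s)) 0) * haar_sign (i div 2^(L-s)) p"
proof (cases "i div 2^(L-s) div 2 = p")
  case True
  then show ?thesis using haar_sign_row_sum_in_block[OF assms(1,5) True] by simp
next
  case False
  then show ?thesis using haar_sign_row_sum_off_block[OF assms] by (simp add: haar_sign_eq)
qed

definition haar_eigenvalue :: "nat \<Rightarrow> (nat \<Rightarrow> nat \<Rightarrow> real) \<Rightarrow> nat \<Rightarrow> real" where
  "haar_eigenvalue L R s =
     (if s = 0 then \<Sum>j<2^L. R 0 j else \<Sum>j<2^L. R 0 j * haar_sign (j div 2^(L-s)) 0)"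

lemma haar_col_eigenvector:
  assumes "invariant_cov L R" "c < 2^L" "i < 2^L"
  shows "(\<Sum>j<2^L. R i j * haar_col L c j) = haar_eigenvalue L R (haar_scale c) * haar_col L c i"
proof (cases "c = 0")
  case True
  then show ?thesis
    using invariant_cov_row_translate[OF assms(1,3), of "\<lambda>_. haar_phi L 0"]
    by (simp add: haar_col_def haar_phi_def haar_scale_def haar_eigenvalue_def
        flip: sum_distrib_right)
next
  case False
  then obtain s p where sp: "1 \<le> s" "s \<le> L" "p < 2^(s-1)"
    "haar_scale c = s" "haar_col L c = haar_psi L s p"
    using haar_col_psi_index[OF _ assms(2)] by (metis neq0_conv)
  define C where "C = 2 powr ((real s - real L - 1) / 2)"
  have "(\<Sum>j<2^L. R i j * haar_col L c j) = C * (\<Sum>j<2^L. R i j * haar_sign (j div 2^(L-s)) p)"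
    by (simp add: sp(5) haar_psi_eq_sign C_def sum_distrib_left ac_simps)
  also have "\<dots> = C * (haar_eigenvalue L R s * haar_sign (i div 2^(L-s)) p)"
    using haar_sign_row_sum[OF assms(1) sp(1-3) assms(3)] sp(1) by (simp add: haar_eigenvalue_def)
  also have "\<dots> = haar_eigenvalue L R (haar_scale c) * haar_col L c i"
    by (simp add: sp(4,5) haar_psi_eq_sign C_def)
  finally show ?thesis .
qed

theorem mainTheorem11:
  fixes L :: nat
  shows "(\<forall>c<2^L. \<forall>c'<2^L.
            (\<Sum>j<2^L. haar_col L c j * haar_col L c' j) = (if c = c' then 1 else 0))
       \<and> (\<forall>R. invariant_cov L R \<longrightarrow>
            (\<exists>ev :: nat \<Rightarrow> real.
               (\<forall>c<2^L. \<forall>i<2^L. (\<Sum>j<2^L. R i j * haar_col L c j) = ev c * haar_col L c i)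
             \<and> (\<forall>c<2^L. \<forall>c'<2^L. haar_scale c = haar_scale c' \<longrightarrow> ev c = ev c')))"
proof (intro conjI allI impI)
  show "(\<Sum>j<2^L. haar_col L c j * haar_col L c' j) = (if c = c' then 1 else 0)"
    if "c < 2^L" "c' < 2^L" for c c'
    using that by (rule haar_col_orthonormal)
  show "\<exists>ev :: nat \<Rightarrow> real.
      (\<forall>c<2^L. \<forall>i<2^L. (\<Sum>j<2^L. R i j * haar_col L c j) = ev c * haar_col L c i)
    \<and> (\<forall>c<2^L. \<forall>c'<2^L. haar_scale c = haar_scale c' \<longrightarrow> ev c = ev c')"
    if "invariant_cov L R" for R
    using haar_col_eigenvector[OF that]
    by (intro exI[of _ "\<lambda>c. haar_eigenvalue L R (haar_scale c)"]) simp
qed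

end
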